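(* Let $G$ be a countable group equipped with symmetric probability measures $\mu_0,\dots,\mu_k$. Assume there is a constant $C>0$ such that for each $R>0$ and each $0\le i\le k$ there is a subset $K_i(R)\subset G$ with $$\sum_{x\in G}|f(xh)-f(x)|^2\le CR\,\mathcal E_{G,\mu_i}(f,f)\qquad\text{for all } f\in L^2(G),\ h\in K_i(R).$$ Assume further that there are an integer $Q\ge1$ and a positive increasing function $\mathbf F$, regularly varying of positive index at infinity, with inverse $\mathbf F^{-1}$, such that $\#\big(\bigcup_{i=0}^kK_i(R)\big)^Q\ge\mathbf F(R)$ for all $R\ge1$, where $A^Q=\{g_1\cdots g_Q: g_j\in A\}$. Let $\mu=(k+1)^{-1}\sum_{i=0}^k\mu_i$. Then $\Lambda_{2,G,\mu}\succeq 1/\mathbf F^{-1}$ on $[1,\infty)$ and $\mu^{(2n)}(e)\preceq 1/\mathbf F(n)$ for $n=1,2,\dots$.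
   Context: Notation. For positive functions on $D=[1,\infty)$ or $D=\{1,2,\dots\}$, $f_1\preceq f_2$ means there are constants $c_1,c_2>0$ with $f_1(t)\le c_1f_2(c_2t)$ for all $t\in D$ (with $c_2t$ replaced by $\max(c_2t,1)$, resp. a nearby integer). A positive function $f$ is regularly varying of index $\gamma$ at infinity if $f(\lambda t)/f(t)\to\lambda^\gamma$ as $t\to\infty$ for every $\lambda>0$. $\mu^{(n)}$ is the $n$-fold convolution power ($u*v(x)=\sum_yu(y)v(y^{-1}x)$), $e$ the identity; $\mu$ symmetric means $\mu(g^{-1})=\mu(g)$. Dirichlet form and spectral profile. $\mathcal E_{G,\mu}(f,f)=\frac12\sum_{x,y\in G}|f(xy)-f(x)|^2\mu(y)$ for $f\in L^2(G)$ (counting measure), and $\Lambda_{2,G,\mu}(v)=\min\{\mathcal E_{G,\mu}(f,f)/\|f\|_2^2:\ 1\le \#\mathrm{supp}(f)\le v\}$ for $v\ge1$. *)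

theory Defs
  imports "HOL-Analysis.Analysis" "HOL-Algebra.Group"
begin

definition prob_meas :: "('a, 'b) monoid_scheme \<Rightarrow> ('a \<Rightarrow> real) \<Rightarrow> bool" where
  "prob_meas G m \<longleftrightarrow> (\<forall>x\<in>carrier G. m x \<ge> 0) \<and> (m has_sum 1) (carrier G)"

definition sym_meas :: "('a, 'b) monoid_scheme \<Rightarrow> ('a \<Rightarrow> real) \<Rightarrow> bool" where
  "sym_meas G m \<longleftrightarrow> (\<forall>x\<in>carrier G. m (inv\<^bsub>G\<^esub> x) = m x)"

definition L2 :: "('a, 'b) monoid_scheme \<Rightarrow> ('a \<Rightarrow> real) set" where
  "L2 G = {f. (\<lambda>x. (f x)\<^sup>2) summable_on carrier G}"

definition norm2sq :: "('a, 'b) monoid_scheme \<Rightarrow> ('a \<Rightarrow> real) \<Rightarrow> real" where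
  "norm2sq G f = (\<Sum>\<^sub>\<infinity>x\<in>carrier G. (f x)\<^sup>2)"

definition dirichlet :: "('a, 'b) monoid_scheme \<Rightarrow> ('a \<Rightarrow> real) \<Rightarrow> ('a \<Rightarrow> real) \<Rightarrow> real" where
  "dirichlet G m f = (\<Sum>\<^sub>\<infinity>(x,y)\<in>carrier G \<times> carrier G. (f (x \<otimes>\<^bsub>G\<^esub> y) - f x)\<^sup>2 * m y) / 2"

definition supp_G :: "('a, 'b) monoid_scheme \<Rightarrow> ('a \<Rightarrow> real) \<Rightarrow> 'a set" where
  "supp_G G f = {x\<in>carrier G. f x \<noteq> 0}"

text \<open>Spectral profile Lambda_{2,G,mu}(v) (the minimum written as an infimum).\<close>
definition spectral_profile :: "('a, 'b) monoid_scheme \<Rightarrow> ('a \<Rightarrow> real) \<Rightarrow> real \<Rightarrow> real" where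
  "spectral_profile G m v = Inf {dirichlet G m f / norm2sq G f | f.
      finite (supp_G G f) \<and> 1 \<le> card (supp_G G f) \<and> real (card (supp_G G f)) \<le> v}"

definition conv :: "('a, 'b) monoid_scheme \<Rightarrow> ('a \<Rightarrow> real) \<Rightarrow> ('a \<Rightarrow> real) \<Rightarrow> 'a \<Rightarrow> real" where
  "conv G u v x = (\<Sum>\<^sub>\<infinity>y\<in>carrier G. u y * v (inv\<^bsub>G\<^esub> y \<otimes>\<^bsub>G\<^esub> x))"

fun conv_pow :: "('a, 'b) monoid_scheme \<Rightarrow> ('a \<Rightarrow> real) \<Rightarrow> nat \<Rightarrow> 'a \<Rightarrow> real" where
  "conv_pow G m 0 = (\<lambda>x. if x = \<one>\<^bsub>G\<^esub> then 1 else 0)"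
| "conv_pow G m (Suc n) = conv G (conv_pow G m n) m"

definition set_power :: "('a, 'b) monoid_scheme \<Rightarrow> 'a set \<Rightarrow> nat \<Rightarrow> 'a set" where
  "set_power G A Q = {foldr (\<lambda>g h. g \<otimes>\<^bsub>G\<^esub> h) gs \<one>\<^bsub>G\<^esub> | gs. length gs = Q \<and> set gs \<subseteq> A}"

definition regularly_varying :: "(real \<Rightarrow> real) \<Rightarrow> real \<Rightarrow> bool" where
  "regularly_varying f \<gamma> \<longleftrightarrow>
     (\<forall>\<^sub>F t in at_top. f t > 0) \<and>
     (\<forall>c>0. ((\<lambda>t. f (c * t) / f t) \<longlongrightarrow> c powr \<gamma>) at_top)"

definition dom_real :: "(real \<Rightarrow> real) \<Rightarrow> (real \<Rightarrow> real) \<Rightarrow> bool" where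
  "dom_real f1 f2 \<longleftrightarrow> (\<exists>c1>0. \<exists>c2>0. \<forall>t\<ge>1. f1 t \<le> c1 * f2 (max (c2 * t) 1))"

text \<open>f1 \<preceq> f2 on {1,2,...}; c2 n replaced by the integer max 1 (ceiling (c2 n)).\<close>
definition dom_nat :: "(nat \<Rightarrow> real) \<Rightarrow> (nat \<Rightarrow> real) \<Rightarrow> bool" where
  "dom_nat f1 f2 \<longleftrightarrow> (\<exists>c1>0. \<exists>c2>0. \<forall>n\<ge>1. f1 n \<le> c1 * f2 (max 1 (nat \<lceil>c2 * real n\<rceil>)))"

end

theory Submission
  imports Defs
begin

text \<open>
  For \<open>t\<close> in the \<open>Q\<close>-fold product set \<open>T\<close> of the \<open>K\<^sub>i(R)\<close>, the pseudo-Poincar\'e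
  inequalities and \<open>\<parallel>f(\<cdot> gh) - f\<parallel> \<le> \<parallel>f(\<cdot> g) - f\<parallel> + \<parallel>f(\<cdot> h) - f\<parallel>\<close> give
  \<open>\<parallel>f(\<cdot> t) - f\<parallel>\<^sup>2 \<le> Q\<^sup>2 C R (k+1) \<E>\<^sub>\<mu>(f)\<close>. If \<open>f\<close> is supported on at most \<open>V\<close> points and
  \<open>S \<subseteq> T\<close> has \<open>2V\<close> elements, then \<open>\<Sum>\<^sub>t\<^sub>\<in>\<^sub>S \<langle>f(\<cdot> t), f\<rangle> \<le> V \<parallel>f\<parallel>\<^sup>2\<close> (Cauchy--Schwarz), so averaging
  over \<open>S\<close> yields the Faber--Krahn inequality \<open>\<parallel>f\<parallel>\<^sup>2 \<le> Q\<^sup>2 C (k+1) F\<^sup>-\<^sup>1(2V) \<E>\<^sub>\<mu>(f)\<close>, choosing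
  \<open>R = F\<^sup>-\<^sup>1(2V)\<close> so that \<open>#T \<ge> F(R) \<ge> 2V\<close>. This is the bound on the spectral profile.

  For the return probabilities \<open>w\<^sub>n = \<mu>\<^sup>(\<^sup>2\<^sup>n\<^sup>)(e) = \<parallel>\<mu>\<^sup>(\<^sup>n\<^sup>)\<parallel>\<^sup>2\<close>, the Faber--Krahn inequality
  applied to a truncation of \<open>\<mu>\<^sup>(\<^sup>n\<^sup>) + \<mu>\<^sup>(\<^sup>n\<^sup>+\<^sup>1\<^sup>)\<close> gives
  \<open>w\<^sub>n\<^sub>+\<^sub>1 \<le> w\<^sub>n - w\<^sub>n / (c F\<^sup>-\<^sup>1(32/w\<^sub>n))\<close>. Hence \<open>w\<close> halves from \<open>2\<^sup>-\<^sup>J\<close> within about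
  \<open>F\<^sup>-\<^sup>1(2\<^sup>J)\<close> steps, and since regular variation makes \<open>F\<^sup>-\<^sup>1\<close> grow geometrically along
  dyadic scales, these times add up to \<open>O(F\<^sup>-\<^sup>1(2\<^sup>J))\<close>, which inverts to \<open>w\<^sub>n \<lesssim> 1/F(cn)\<close>.
\<close>

section \<open>Unordered sums and symmetric forms\<close>

lemma has_sum_sum:
  fixes f :: "'i \<Rightarrow> 'x \<Rightarrow> 'a::topological_comm_monoid_add"
  assumes "finite I" "\<And>i. i \<in> I \<Longrightarrow> (f i has_sum s i) A"
  shows "((\<lambda>x. \<Sum>i\<in>I. f i x) has_sum (\<Sum>i\<in>I. s i)) A"
  using assms by (induction I rule: finite_induct) (auto intro: has_sum_add)

lemma has_sum_Sigma_nonneg: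
  fixes f :: "'x \<times> 'y \<Rightarrow> real"
  assumes "\<And>x y. x \<in> A \<Longrightarrow> y \<in> B x \<Longrightarrow> 0 \<le> f (x, y)"
    and "\<And>x. x \<in> A \<Longrightarrow> ((\<lambda>y. f (x, y)) has_sum g x) (B x)"
    and "(g has_sum S) A"
  shows "(f has_sum S) (Sigma A B)"
proof -
  have "f summable_on Sigma A B"
    by (rule summable_on_SigmaI[OF assms(2)]) (use assms in \<open>auto simp: has_sum_iff\<close>)
  then show ?thesis
    using has_sum_SigmaI[OF assms(2,3)] by blast
qed

lemma symmetric_form_expand:
  fixes B :: "('a \<Rightarrow> real) \<Rightarrow> ('a \<Rightarrow> real) \<Rightarrow> real"
  assumes add: "\<And>f g h. f \<in> L \<Longrightarrow> g \<in> L \<Longrightarrow> h \<in> L \<Longrightarrow> B (\<lambda>x. f x + g x) h = B f h + B g h"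
    and scale: "\<And>c f h. B (\<lambda>x. c * f x) h = c * B f h"
    and sym: "\<And>f g. f \<in> L \<Longrightarrow> g \<in> L \<Longrightarrow> B f g = B g f"
    and L_add: "\<And>f g. f \<in> L \<Longrightarrow> g \<in> L \<Longrightarrow> (\<lambda>x. f x + g x) \<in> L"
    and L_scale: "\<And>c f. f \<in> L \<Longrightarrow> (\<lambda>x. c * f x) \<in> L"
    and f: "f \<in> L" and g: "g \<in> L"
  shows "B (\<lambda>x. f x + c * g x) (\<lambda>x. f x + c * g x) = B f f + 2 * c * B f g + c\<^sup>2 * B g g"
proof -
  define h where "h = (\<lambda>x. f x + c * g x)"
  have cg: "(\<lambda>x. c * g x) \<in> L" and h: "h \<in> L"
    using L_scale L_add f g by (auto simp: h_def)
  have "B h h = B f h + c * B g h"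
    unfolding h_def by (subst add) (use f cg h in \<open>auto simp: h_def scale\<close>)
  also have "B f h = B f f + c * B g f"
    using sym[OF f h] add[OF f cg f] by (simp add: h_def scale)
  also have "B g h = B f g + c * B g g"
    using sym[OF g h] add[OF f cg g] by (simp add: h_def scale)
  finally show ?thesis
    using sym[OF f g] by (simp add: h_def power2_eq_square algebra_simps)
qed

lemma abs_mult_le_half_sq:
  fixes a b c :: real
  assumes "0 \<le> c"
  shows "\<bar>a * b * c\<bar> \<le> (a\<^sup>2 * c + b\<^sup>2 * c) / 2"
proof -
  have "2 * \<bar>a * b\<bar> \<le> a\<^sup>2 + b\<^sup>2"
    using sum_squares_bound[of "\<bar>a\<bar>" "\<bar>b\<bar>"] by (simp add: abs_mult)
  from mult_right_mono[OF this assms] show ?thesis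
    using assms by (simp add: abs_mult algebra_simps)
qed

lemma power2_add_le_weighted:
  fixes a b e :: real
  assumes "0 < e"
  shows "(a + b)\<^sup>2 \<le> (1 + e) * a\<^sup>2 + (1 + 1 / e) * b\<^sup>2"
proof -
  have "(1 + e) * a\<^sup>2 + (1 + 1 / e) * b\<^sup>2 - (a + b)\<^sup>2 = (e * a - b)\<^sup>2 / e"
    using assms by (simp add: field_simps power2_eq_square)
  then show ?thesis
    using assms by (metis diff_ge_0_iff_ge divide_nonneg_pos zero_le_power2)
qed

lemma superlevel_set_card_le:
  fixes f :: "'a \<Rightarrow> real"
  assumes nonneg: "\<And>x. x \<in> A \<Longrightarrow> 0 \<le> f x" and has_sum_f: "(f has_sum M) A" and t: "0 < t"
  shows "finite {x \<in> A. t < f x}" and "real (card {x \<in> A. t < f x}) \<le> M / t"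
proof -
  have card_le: "real (card B) \<le> M / t" if B: "B \<subseteq> {x \<in> A. t < f x}" "finite B" for B
  proof -
    have "real (card B) * t \<le> sum f B"
      using sum_mono[of B "\<lambda>_. t" f] B by force
    also have "\<dots> \<le> M"
      by (rule finite_sum_le_has_sum[OF has_sum_f B(2)]) (use B nonneg in auto)
    finally show ?thesis
      using t by (simp add: pos_le_divide_eq)
  qed
  then have "card B \<le> nat \<lfloor>M / t\<rfloor>" if "B \<subseteq> {x \<in> A. t < f x}" "finite B" for B
    using that by (simp add: le_nat_floor)
  then show "finite {x \<in> A. t < f x}"
    using finite_if_finite_subsets_card_bdd by blast
  then show "real (card {x \<in> A. t < f x}) \<le> M / t"
    using card_le by blast
qed

section \<open>Square-summable functions on a group\<close>

lemma L2_mult_summable: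
  assumes "f \<in> L2 G" "g \<in> L2 G"
  shows "(\<lambda>x. f x * g x) summable_on carrier G"
proof -
  have "(\<lambda>x. norm (f x * g x)) summable_on carrier G"
    by (rule abs_summable_product) (use assms in \<open>simp_all add: L2_def power2_eq_square\<close>)
  then show ?thesis
    using summable_on_iff_abs_summable_on_real by blast
qed

lemma L2_add:
  assumes "f \<in> L2 G" "g \<in> L2 G"
  shows "(\<lambda>x. f x + g x) \<in> L2 G"
proof -
  have "(\<lambda>x. (f x)\<^sup>2 + 2 * (f x * g x) + (g x)\<^sup>2) summable_on carrier G"
    by (intro summable_on_add summable_on_cmult_right L2_mult_summable assms)
       (use assms in \<open>auto simp: L2_def\<close>)
  then show ?thesis
    by (simp add: L2_def power2_eq_square algebra_simps)
qed

lemma L2_cmult: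
  assumes "f \<in> L2 G"
  shows "(\<lambda>x. c * f x) \<in> L2 G"
proof -
  have "(\<lambda>x. c\<^sup>2 * (f x)\<^sup>2) summable_on carrier G"
    by (intro summable_on_cmult_right) (use assms in \<open>auto simp: L2_def\<close>)
  then show ?thesis
    by (simp add: L2_def power_mult_distrib)
qed

lemma L2_diff:
  assumes "f \<in> L2 G" "g \<in> L2 G"
  shows "(\<lambda>x. f x - g x) \<in> L2 G"
  using L2_add[OF assms(1) L2_cmult[OF assms(2), of "-1"]] by simp

lemma L2_finite_support:
  assumes "finite (supp_G G f)"
  shows "f \<in> L2 G"
  unfolding L2_def using assms
  by (auto intro!: finite_nonzero_values_imp_summable_on simp: supp_G_def)

lemma has_sum_norm2sq:
  "f \<in> L2 G \<Longrightarrow> ((\<lambda>x. (f x)\<^sup>2) has_sum norm2sq G f) (carrier G)"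
  by (simp add: L2_def norm2sq_def)

lemma norm2sq_nonneg: "0 \<le> norm2sq G f"
  unfolding norm2sq_def by (rule infsum_nonneg) simp

lemma norm2sq_pos:
  assumes "f \<in> L2 G" "x \<in> carrier G" "f x \<noteq> 0"
  shows "0 < norm2sq G f"
proof -
  have "(f x)\<^sup>2 \<le> norm2sq G f"
    using finite_sum_le_has_sum[OF has_sum_norm2sq[OF assms(1)], of "{x}"] assms(2) by simp
  then show ?thesis
    using assms(3) by (meson less_le_trans zero_less_power2)
qed

definition l2_inner :: "('a, 'b) monoid_scheme \<Rightarrow> ('a \<Rightarrow> real) \<Rightarrow> ('a \<Rightarrow> real) \<Rightarrow> real" where
  "l2_inner G f g = (\<Sum>\<^sub>\<infinity>x\<in>carrier G. f x * g x)"

lemma l2_inner_commute: "l2_inner G f g = l2_inner G g f"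
  by (simp add: l2_inner_def mult.commute)

lemma norm2sq_eq_l2_inner: "norm2sq G f = l2_inner G f f"
  by (simp add: l2_inner_def norm2sq_def power2_eq_square)

lemma l2_inner_add_left:
  assumes "f \<in> L2 G" "g \<in> L2 G" "h \<in> L2 G"
  shows "l2_inner G (\<lambda>x. f x + g x) h = l2_inner G f h + l2_inner G g h"
  unfolding l2_inner_def distrib_right
  by (rule infsum_add) (auto intro: L2_mult_summable assms)

lemma l2_inner_cmult_left: "l2_inner G (\<lambda>x. c * f x) h = c * l2_inner G f h"
  unfolding l2_inner_def mult.assoc by (rule infsum_cmult_right')

lemma norm2sq_add_cmult:
  assumes "f \<in> L2 G" "g \<in> L2 G"
  shows "norm2sq G (\<lambda>x. f x + c * g x)
    = l2_inner G f f + 2 * c * l2_inner G f g + c\<^sup>2 * l2_inner G g g"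
  unfolding norm2sq_eq_l2_inner
  by (rule symmetric_form_expand[where L = "L2 G"])
     (auto intro: l2_inner_add_left l2_inner_cmult_left l2_inner_commute L2_add L2_cmult assms)

lemma norm2sq_add_le:
  assumes "f \<in> L2 G" "g \<in> L2 G" "0 < e"
  shows "norm2sq G (\<lambda>x. f x + g x) \<le> (1 + e) * norm2sq G f + (1 + 1 / e) * norm2sq G g"
  by (rule has_sum_mono[OF has_sum_norm2sq[OF L2_add[OF assms(1,2)]]
        has_sum_add[OF has_sum_cmult_right[OF has_sum_norm2sq[OF assms(1)]]
          has_sum_cmult_right[OF has_sum_norm2sq[OF assms(2)]]]])
     (rule power2_add_le_weighted[OF assms(3)])

section \<open>Energy of right translates\<close>

definition shift_energy :: "('a, 'b) monoid_scheme \<Rightarrow> ('a \<Rightarrow> real) \<Rightarrow> 'a \<Rightarrow> real" where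
  "shift_energy G f h = (\<Sum>\<^sub>\<infinity>x\<in>carrier G. (f (x \<otimes>\<^bsub>G\<^esub> h) - f x)\<^sup>2)"

context group
begin

lemma has_sum_right_translate:
  assumes "h \<in> carrier G"
  shows "((\<lambda>x. \<phi> (x \<otimes> h)) has_sum S) (carrier G) \<longleftrightarrow> (\<phi> has_sum S) (carrier G)"
  by (rule has_sum_reindex_bij_witness[where i = "\<lambda>x. x \<otimes> inv h" and j = "\<lambda>x. x \<otimes> h"])
     (use assms in \<open>auto simp: m_assoc\<close>)

lemma L2_right_translate:
  assumes "h \<in> carrier G" "f \<in> L2 G"
  shows "(\<lambda>x. f (x \<otimes> h)) \<in> L2 G"
  using assms has_sum_right_translate[OF assms(1), of "\<lambda>x. (f x)\<^sup>2"]
  by (auto simp: L2_def summable_on_def)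

lemma norm2sq_right_translate:
  assumes "h \<in> carrier G"
  shows "norm2sq G (\<lambda>x. f (x \<otimes> h)) = norm2sq G f"
  unfolding norm2sq_def
  by (rule infsum_reindex_bij_witness[where i = "\<lambda>x. x \<otimes> inv h" and j = "\<lambda>x. x \<otimes> h"])
     (use assms in \<open>auto simp: m_assoc\<close>)

lemma shift_energy_eq_norm2sq: "shift_energy G f h = norm2sq G (\<lambda>x. f (x \<otimes> h) - f x)"
  by (simp add: shift_energy_def norm2sq_def)

lemma shift_energy_mult_le:
  assumes f: "f \<in> L2 G" and h: "h \<in> carrier G" and q: "q \<in> carrier G" and e: "0 < e"
  shows "shift_energy G f (h \<otimes> q) \<le> (1 + e) * shift_energy G f q + (1 + 1 / e) * shift_energy G f h"
proof -
  have "shift_energy G f (h \<otimes> q)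
      = norm2sq G (\<lambda>x. (f (x \<otimes> h \<otimes> q) - f (x \<otimes> h)) + (f (x \<otimes> h) - f x))"
    unfolding shift_energy_def norm2sq_def
    by (rule infsum_cong) (use h q in \<open>simp add: m_assoc\<close>)
  also have "\<dots> \<le> (1 + e) * norm2sq G (\<lambda>x. f (x \<otimes> h \<otimes> q) - f (x \<otimes> h))
      + (1 + 1 / e) * norm2sq G (\<lambda>x. f (x \<otimes> h) - f x)"
    by (intro norm2sq_add_le e L2_diff L2_right_translate f h q)
  also have "norm2sq G (\<lambda>x. f (x \<otimes> h \<otimes> q) - f (x \<otimes> h)) = shift_energy G f q"
    using norm2sq_right_translate[OF h, of "\<lambda>x. f (x \<otimes> q) - f x"]
    by (simp add: shift_energy_eq_norm2sq)
  finally show ?thesis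
    by (simp add: shift_energy_eq_norm2sq)
qed

text \<open>Choosing \<open>e = 1/n\<close> in the induction step makes \<open>(n + 1)\<^sup>2\<close> come out exactly.\<close>

lemma shift_energy_prod_le:
  assumes f: "f \<in> L2 G"
    and U: "\<And>h. h \<in> U \<Longrightarrow> h \<in> carrier G \<and> shift_energy G f h \<le> D"
    and hs: "set hs \<subseteq> U"
  shows "foldr (\<otimes>) hs \<one> \<in> carrier G \<and> shift_energy G f (foldr (\<otimes>) hs \<one>) \<le> (real (length hs))\<^sup>2 * D"
  using hs
proof (induction hs)
  case Nil
  have "shift_energy G f \<one> = 0"
    unfolding shift_energy_def by (rule infsum_0) simp
  then show ?case
    by simp
next
  case (Cons h hs)
  define q where "q = foldr (\<otimes>) hs \<one>"
  define n where "n = real (length hs)"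
  have h: "h \<in> carrier G" "shift_energy G f h \<le> D" and q: "q \<in> carrier G" "shift_energy G f q \<le> n\<^sup>2 * D"
    using U Cons by (auto simp: q_def n_def)
  have "shift_energy G f (h \<otimes> q) \<le> (n + 1)\<^sup>2 * D"
  proof (cases "hs = []")
    case True
    then show ?thesis
      using h by (simp add: q_def n_def)
  next
    case False
    then have n: "1 \<le> n"
      by (simp add: n_def Suc_le_eq)
    have "shift_energy G f (h \<otimes> q) \<le> (1 + 1 / n) * shift_energy G f q + (1 + n) * shift_energy G f h"
      using shift_energy_mult_le[OF f h(1) q(1), of "1 / n"] n by simp
    also have "\<dots> \<le> (1 + 1 / n) * (n\<^sup>2 * D) + (1 + n) * D"
      using q(2) h(2) n by (intro add_mono mult_left_mono) auto
    also have "\<dots> = (n + 1)\<^sup>2 * D"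
      using n by (simp add: field_simps power2_eq_square)
    finally show ?thesis .
  qed
  then show ?case
    using h q by (simp add: q_def n_def add.commute)
qed

lemma shift_energy_eq:
  assumes f: "f \<in> L2 G" and t: "t \<in> carrier G"
  shows "shift_energy G f t = 2 * norm2sq G f - 2 * l2_inner G (\<lambda>x. f (x \<otimes> t)) f"
proof -
  have ft: "(\<lambda>x. f (x \<otimes> t)) \<in> L2 G"
    by (rule L2_right_translate[OF t f])
  have "shift_energy G f t = norm2sq G (\<lambda>x. f (x \<otimes> t) + (- 1) * f x)"
    by (simp add: shift_energy_eq_norm2sq)
  also have "\<dots> = norm2sq G (\<lambda>x. f (x \<otimes> t)) - 2 * l2_inner G (\<lambda>x. f (x \<otimes> t)) f + norm2sq G f"
    by (subst norm2sq_add_cmult[OF ft f]) (simp add: norm2sq_eq_l2_inner)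
  finally show ?thesis
    by (simp add: norm2sq_right_translate[OF t])
qed

lemma sum_abs_left_translate_le:
  assumes fin: "finite (supp_G G f)" and S: "finite S" "S \<subseteq> carrier G" and x: "x \<in> carrier G"
  shows "(\<Sum>t\<in>S. \<bar>f (x \<otimes> t)\<bar>) \<le> (\<Sum>y\<in>supp_G G f. \<bar>f y\<bar>)"
proof -
  have "inj_on ((\<otimes>) x) S"
    unfolding inj_on_def using S(2) x Units_l_cancel Units_eq by blast
  then have "(\<Sum>t\<in>S. \<bar>f (x \<otimes> t)\<bar>) = (\<Sum>y\<in>(\<otimes>) x ` S. \<bar>f y\<bar>)"
    by (simp add: sum.reindex)
  also have "\<dots> \<le> (\<Sum>y\<in>(\<otimes>) x ` S \<union> supp_G G f. \<bar>f y\<bar>)"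
    by (rule sum_mono2) (use S fin in auto)
  also have "\<dots> = (\<Sum>y\<in>supp_G G f. \<bar>f y\<bar>)"
    by (rule sum.mono_neutral_right) (use S fin x in \<open>auto simp: supp_G_def\<close>)
  finally show ?thesis .
qed

lemma sum_l2_inner_right_translate_le:
  assumes fin: "finite (supp_G G f)" and S: "finite S" "S \<subseteq> carrier G"
  shows "(\<Sum>t\<in>S. l2_inner G (\<lambda>x. f (x \<otimes> t)) f) \<le> real (card (supp_G G f)) * norm2sq G f"
proof -
  define A where "A = supp_G G f"
  have A: "finite A" "A \<subseteq> carrier G" and zero: "\<And>x. x \<in> carrier G \<Longrightarrow> x \<notin> A \<Longrightarrow> f x = 0"
    using fin by (auto simp: A_def supp_G_def)
  have inner: "l2_inner G (\<lambda>x. f (x \<otimes> t)) f = (\<Sum>x\<in>A. f (x \<otimes> t) * f x)" for t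
    unfolding l2_inner_def using A zero by (subst infsum_cong_neutral[where T = A]) auto
  have norm: "norm2sq G f = (\<Sum>x\<in>A. (f x)\<^sup>2)"
    unfolding norm2sq_def using A zero by (subst infsum_cong_neutral[where T = A]) auto
  have "(\<Sum>t\<in>S. l2_inner G (\<lambda>x. f (x \<otimes> t)) f) = (\<Sum>x\<in>A. f x * (\<Sum>t\<in>S. f (x \<otimes> t)))"
    by (simp add: inner sum_distrib_left mult.commute sum.swap[of _ S])
  also have "\<dots> \<le> (\<Sum>x\<in>A. \<bar>f x\<bar> * (\<Sum>y\<in>A. \<bar>f y\<bar>))"
  proof (rule sum_mono)
    fix x assume "x \<in> A"
    have "f x * (\<Sum>t\<in>S. f (x \<otimes> t)) \<le> \<bar>f x\<bar> * \<bar>\<Sum>t\<in>S. f (x \<otimes> t)\<bar>"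
      by (simp add: abs_mult[symmetric])
    also have "\<bar>\<Sum>t\<in>S. f (x \<otimes> t)\<bar> \<le> (\<Sum>t\<in>S. \<bar>f (x \<otimes> t)\<bar>)"
      by (rule sum_abs)
    also have "\<dots> \<le> (\<Sum>y\<in>A. \<bar>f y\<bar>)"
      using \<open>x \<in> A\<close> A(2) unfolding A_def by (intro sum_abs_left_translate_le fin S) auto
    finally show "f x * (\<Sum>t\<in>S. f (x \<otimes> t)) \<le> \<bar>f x\<bar> * (\<Sum>y\<in>A. \<bar>f y\<bar>)"
      by (simp add: mult_left_mono)
  qed
  also have "\<dots> = (\<Sum>y\<in>A. \<bar>f y\<bar>)\<^sup>2"
    by (simp add: sum_distrib_right power2_eq_square)
  also have "\<dots> \<le> (\<Sum>y\<in>A. \<bar>f y\<bar>\<^sup>2) * card A"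
    by (rule sum_squared_le_sum_of_squares)
  finally show ?thesis
    by (simp add: norm A_def mult.commute)
qed

lemma norm2sq_le_of_shift_energy_le:
  assumes fin: "finite (supp_G G f)" and V: "0 < V" "real (card (supp_G G f)) \<le> V"
    and S: "finite S" "S \<subseteq> carrier G" "2 * V \<le> real (card S)"
    and D: "\<And>t. t \<in> S \<Longrightarrow> shift_energy G f t \<le> D"
  shows "norm2sq G f \<le> D"
proof -
  have f: "f \<in> L2 G"
    by (rule L2_finite_support[OF fin])
  have "2 * real (card S) * norm2sq G f - 2 * (V * norm2sq G f)
      \<le> 2 * real (card S) * norm2sq G f - 2 * (\<Sum>t\<in>S. l2_inner G (\<lambda>x. f (x \<otimes> t)) f)"
    using sum_l2_inner_right_translate_le[OF fin S(1,2)] mult_right_mono[OF V(2) norm2sq_nonneg[of G f]]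
    by linarith
  also have "\<dots> = (\<Sum>t\<in>S. 2 * norm2sq G f - 2 * l2_inner G (\<lambda>x. f (x \<otimes> t)) f)"
    by (simp add: sum_subtractf sum_distrib_left)
  also have "\<dots> = (\<Sum>t\<in>S. shift_energy G f t)"
    by (rule sum.cong) (use S(2) shift_energy_eq[OF f] in auto)
  also have "\<dots> \<le> real (card S) * D"
    using sum_mono[OF D] by simp
  finally have "real (card S) * norm2sq G f \<le> real (card S) * D"
    using mult_right_mono[OF S(3) norm2sq_nonneg[of G f]] by (simp add: algebra_simps)
  moreover have "0 < real (card S)"
    using V(1) S(3) by linarith
  ultimately show ?thesis
    by simp
qed

end

section \<open>Symmetric random walks\<close>

locale group_prob = group G for G :: "('a, 'b) monoid_scheme" (structure) +
  fixes m :: "'a \<Rightarrow> real"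
  assumes nonneg: "x \<in> carrier G \<Longrightarrow> 0 \<le> m x"
    and has_sum_one: "(m has_sum 1) (carrier G)"
begin

lemma has_sum_sq_translate_weighted:
  assumes "f \<in> L2 G"
  shows "((\<lambda>(x, y). (f (x \<otimes> y))\<^sup>2 * m y) has_sum norm2sq G f) (carrier G \<times> carrier G)"
proof -
  have "((\<lambda>(y, x). (f (x \<otimes> y))\<^sup>2 * m y) has_sum norm2sq G f) (carrier G \<times> carrier G)"
  proof (rule has_sum_Sigma_nonneg[where g = "\<lambda>y. norm2sq G f * m y"])
    fix y assume y: "y \<in> carrier G"
    show "((\<lambda>x. case (y, x) of (y, x) \<Rightarrow> (f (x \<otimes> y))\<^sup>2 * m y) has_sum norm2sq G f * m y) (carrier G)"
      using has_sum_cmult_left[OF has_sum_norm2sq[OF assms], of "m y"]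
        has_sum_right_translate[OF y, of "\<lambda>x. (f x)\<^sup>2 * m y"]
      by simp
  next
    show "((\<lambda>y. norm2sq G f * m y) has_sum norm2sq G f) (carrier G)"
      using has_sum_cmult_right[OF has_sum_one, of "norm2sq G f"] by simp
  qed (auto intro!: mult_nonneg_nonneg nonneg)
  then show ?thesis
    by (subst has_sum_swap) simp
qed

lemma has_sum_sq_weighted:
  assumes "f \<in> L2 G"
  shows "((\<lambda>(x, y). (f x)\<^sup>2 * m y) has_sum norm2sq G f) (carrier G \<times> carrier G)"
  by (rule has_sum_Sigma_nonneg[where g = "\<lambda>x. (f x)\<^sup>2"])
     (use has_sum_cmult_right[OF has_sum_one] in \<open>auto intro!: mult_nonneg_nonneg nonneg
        has_sum_norm2sq assms\<close>)

text \<open>\<open>markov_form f g = \<langle>P f, g\<rangle>\<close> for the Markov operator \<open>P f (x) = \<Sum>\<^sub>y f (x y) m(y)\<close> of the walk.\<close>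

definition markov_form :: "('a \<Rightarrow> real) \<Rightarrow> ('a \<Rightarrow> real) \<Rightarrow> real" where
  "markov_form f g = (\<Sum>\<^sub>\<infinity>(x, y)\<in>carrier G \<times> carrier G. f (x \<otimes> y) * g x * m y)"

lemma has_sum_markov_bound:
  assumes "f \<in> L2 G" "g \<in> L2 G"
  shows "((\<lambda>(x, y). ((f (x \<otimes> y))\<^sup>2 * m y + (g x)\<^sup>2 * m y) / 2)
           has_sum (norm2sq G f + norm2sq G g) / 2) (carrier G \<times> carrier G)"
  using has_sum_cmult_left[OF has_sum_add[OF has_sum_sq_translate_weighted[OF assms(1)]
      has_sum_sq_weighted[OF assms(2)]], of "1/2"]
  by (simp add: case_prod_unfold)

lemma markov_integrand_bound:
  assumes "p \<in> carrier G \<times> carrier G"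
  shows "norm (case p of (x, y) \<Rightarrow> f (x \<otimes> y) * g x * m y)
    \<le> (case p of (x, y) \<Rightarrow> ((f (x \<otimes> y))\<^sup>2 * m y + (g x)\<^sup>2 * m y) / 2)"
  using assms abs_mult_le_half_sq[OF nonneg] by (auto simp: case_prod_unfold)

lemma has_sum_markov_form:
  assumes "f \<in> L2 G" "g \<in> L2 G"
  shows "((\<lambda>(x, y). f (x \<otimes> y) * g x * m y) has_sum markov_form f g) (carrier G \<times> carrier G)"
proof -
  have "(\<lambda>p. norm (case p of (x, y) \<Rightarrow> f (x \<otimes> y) * g x * m y)) summable_on (carrier G \<times> carrier G)"
    by (rule Infinite_Sum.abs_summable_on_comparison_test'[OF has_sum_imp_summable[OF has_sum_markov_bound[OF assms]]
          markov_integrand_bound])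
  then have "(\<lambda>(x, y). f (x \<otimes> y) * g x * m y) summable_on (carrier G \<times> carrier G)"
    using summable_on_iff_abs_summable_on_real by blast
  then show ?thesis
    by (simp add: markov_form_def has_sum_iff)
qed

lemma abs_markov_form_le:
  assumes "f \<in> L2 G" "g \<in> L2 G"
  shows "\<bar>markov_form f g\<bar> \<le> (norm2sq G f + norm2sq G g) / 2"
  using norm_infsum_le[OF has_sum_markov_form[OF assms] has_sum_markov_bound[OF assms]
      markov_integrand_bound] by simp

lemma markov_form_add_left:
  assumes "f1 \<in> L2 G" "f2 \<in> L2 G" "g \<in> L2 G"
  shows "markov_form (\<lambda>x. f1 x + f2 x) g = markov_form f1 g + markov_form f2 g"
proof -
  have "((\<lambda>(x, y). (f1 (x \<otimes> y) + f2 (x \<otimes> y)) * g x * m y)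
      has_sum markov_form f1 g + markov_form f2 g) (carrier G \<times> carrier G)"
    using has_sum_add[OF has_sum_markov_form[OF assms(1,3)] has_sum_markov_form[OF assms(2,3)]]
    by (simp add: case_prod_unfold algebra_simps)
  from has_sum_unique[OF has_sum_markov_form[OF L2_add[OF assms(1,2)] assms(3)] this]
  show ?thesis .
qed

lemma markov_form_cmult_left: "markov_form (\<lambda>x. c * f x) g = c * markov_form f g"
  unfolding markov_form_def case_prod_unfold mult.assoc
  by (rule infsum_cmult_right')

lemma has_sum_dirichlet:
  assumes "f \<in> L2 G"
  shows "((\<lambda>(x, y). (f (x \<otimes> y) - f x)\<^sup>2 * m y) has_sum 2 * dirichlet G m f) (carrier G \<times> carrier G)"
    and "dirichlet G m f = norm2sq G f - markov_form f f"
proof -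
  have "((\<lambda>p. ((case p of (x, y) \<Rightarrow> (f (x \<otimes> y))\<^sup>2 * m y) + (case p of (x, y) \<Rightarrow> (f x)\<^sup>2 * m y))
      + (-2) * (case p of (x, y) \<Rightarrow> f (x \<otimes> y) * f x * m y)) has_sum
       ((norm2sq G f + norm2sq G f) + (-2) * markov_form f f)) (carrier G \<times> carrier G)"
    by (intro has_sum_add has_sum_cmult_right has_sum_sq_translate_weighted has_sum_sq_weighted
        has_sum_markov_form assms)
  then have hs: "((\<lambda>(x, y). (f (x \<otimes> y) - f x)\<^sup>2 * m y) has_sum 2 * (norm2sq G f - markov_form f f))
      (carrier G \<times> carrier G)"
    by (simp add: case_prod_unfold power2_diff algebra_simps)
  then show "dirichlet G m f = norm2sq G f - markov_form f f"
    by (simp add: dirichlet_def has_sum_iff)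
  with hs show "((\<lambda>(x, y). (f (x \<otimes> y) - f x)\<^sup>2 * m y) has_sum 2 * dirichlet G m f) (carrier G \<times> carrier G)"
    by simp
qed

lemma truncation:
  assumes nonneg_f: "\<And>x. x \<in> carrier G \<Longrightarrow> 0 \<le> f x" and f: "f \<in> L2 G"
    and has_sum_f: "(f has_sum M) (carrier G)" and t: "0 < t"
  defines "g \<equiv> \<lambda>x. max (f x - t) 0"
  shows "g \<in> L2 G"
    and "dirichlet G m g \<le> dirichlet G m f"
    and "norm2sq G f - 2 * t * M \<le> norm2sq G g"
    and "finite (supp_G G g)"
    and "real (card (supp_G G g)) \<le> M / t"
proof -
  show g: "g \<in> L2 G"
    unfolding L2_def mem_Collect_eq
    by (rule summable_on_comparison_test[where f = "\<lambda>x. (f x)\<^sup>2"])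
       (use f nonneg_f t in \<open>auto simp: L2_def g_def intro!: power_mono\<close>)
  have "(max (a - t) 0 - max (b - t) 0)\<^sup>2 \<le> (a - b)\<^sup>2" for a b
    by (rule abs_le_square_iff[THEN iffD1]) linarith
  then show "dirichlet G m g \<le> dirichlet G m f"
    using has_sum_mono[OF has_sum_dirichlet(1)[OF g] has_sum_dirichlet(1)[OF f]]
    by (auto simp: g_def intro!: mult_right_mono nonneg)
  have "a\<^sup>2 - 2 * t * a \<le> (max (a - t) 0)\<^sup>2" if "0 \<le> a" for a
  proof (cases "t \<le> a")
    case False
    then have "a * (a - 2 * t) \<le> 0" using that by (intro mult_nonneg_nonpos) auto
    then show ?thesis using False by (simp add: power2_eq_square algebra_simps)
  qed (simp add: power2_diff)
  then show "norm2sq G f - 2 * t * M \<le> norm2sq G g"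
    using has_sum_mono[OF has_sum_add[OF has_sum_norm2sq[OF f] has_sum_cmult_right[OF has_sum_f,
          of "- 2 * t"]] has_sum_norm2sq[OF g]] nonneg_f
    by (simp add: g_def)
  have "supp_G G g = {x \<in> carrier G. t < f x}"
    by (auto simp: supp_G_def g_def)
  then show "finite (supp_G G g)" "real (card (supp_G G g)) \<le> M / t"
    using superlevel_set_card_le[OF nonneg_f has_sum_f t] by simp_all
qed

end

lemma dirichlet_le_of_measure_le:
  assumes "group_prob G m" "group_prob G m'" "f \<in> L2 G"
    and le: "\<And>y. y \<in> carrier G \<Longrightarrow> m y \<le> c * m' y"
  shows "dirichlet G m f \<le> c * dirichlet G m' f"
proof -
  have "2 * dirichlet G m f \<le> c * (2 * dirichlet G m' f)"
  proof (rule has_sum_mono[OF group_prob.has_sum_dirichlet(1)[OF assms(1,3)]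
        has_sum_cmult_right[OF group_prob.has_sum_dirichlet(1)[OF assms(2,3)]]])
    fix p assume "p \<in> carrier G \<times> carrier G"
    then obtain x y where p: "p = (x, y)" "y \<in> carrier G" by auto
    have "(f (x \<otimes>\<^bsub>G\<^esub> y) - f x)\<^sup>2 * m y \<le> (f (x \<otimes>\<^bsub>G\<^esub> y) - f x)\<^sup>2 * (c * m' y)"
      by (rule mult_left_mono[OF le[OF p(2)]]) simp
    then show "(case p of (x, y) \<Rightarrow> (f (x \<otimes>\<^bsub>G\<^esub> y) - f x)\<^sup>2 * m y)
        \<le> c * (case p of (x, y) \<Rightarrow> (f (x \<otimes>\<^bsub>G\<^esub> y) - f x)\<^sup>2 * m' y)"
      by (simp add: p ac_simps)
  qed
  then show ?thesis by simp
qed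

locale group_sym_prob = group_prob +
  assumes symmetric: "x \<in> carrier G \<Longrightarrow> m (inv x) = m x"
begin

lemma markov_form_commute:
  assumes "f \<in> L2 G" "g \<in> L2 G"
  shows "markov_form f g = markov_form g f"
  unfolding markov_form_def
  by (rule infsum_reindex_bij_witness[where i = "\<lambda>(x, y). (x \<otimes> y, inv y)"
        and j = "\<lambda>(x, y). (x \<otimes> y, inv y)"])
     (auto simp: m_assoc symmetric)

lemma markov_form_add_cmult:
  assumes "f \<in> L2 G" "g \<in> L2 G"
  shows "markov_form (\<lambda>x. f x + c * g x) (\<lambda>x. f x + c * g x)
    = markov_form f f + 2 * c * markov_form f g + c\<^sup>2 * markov_form g g"
  by (rule symmetric_form_expand[where L = "L2 G"])
     (auto intro: markov_form_add_left markov_form_cmult_left markov_form_commute L2_add L2_cmult assms)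

abbreviation u :: "nat \<Rightarrow> 'a \<Rightarrow> real" where
  "u n \<equiv> conv_pow G m n"

lemma conv_pow_Suc_eq:
  assumes x: "x \<in> carrier G"
  shows "u (Suc n) x = (\<Sum>\<^sub>\<infinity>z\<in>carrier G. u n (x \<otimes> z) * m z)"
  unfolding conv_pow.simps conv_def
proof (rule infsum_reindex_bij_witness[where j = "\<lambda>y. inv x \<otimes> y" and i = "\<lambda>z. x \<otimes> z"])
  fix y assume y: "y \<in> carrier G"
  have "m (inv y \<otimes> x) = m (inv x \<otimes> y)"
    using symmetric[of "inv x \<otimes> y"] x y by (simp add: inv_mult_group)
  then show "u n (x \<otimes> (inv x \<otimes> y)) * m (inv x \<otimes> y) = u n y * m (inv y \<otimes> x)"
    using x y by (simp add: m_assoc[symmetric])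
qed (use x in \<open>auto simp: m_assoc[symmetric]\<close>)

lemma conv_pow_nonneg_has_sum:
  "(\<forall>x\<in>carrier G. 0 \<le> u n x) \<and> (u n has_sum 1) (carrier G)"
proof (induction n)
  case 0
  have "(u 0 has_sum 1) {\<one>}"
    using has_sum_finite[of "{\<one>}" "u 0"] by simp
  then show ?case
    by (subst has_sum_cong_neutral[where T = "{\<one>}"]) auto
next
  case (Suc n)
  then have nonneg_u: "\<And>x. x \<in> carrier G \<Longrightarrow> 0 \<le> u n x" and has_sum_u: "(u n has_sum 1) (carrier G)"
    by auto
  have "((\<lambda>(y, x). u n (x \<otimes> y) * m y) has_sum 1) (carrier G \<times> carrier G)"
  proof (rule has_sum_Sigma_nonneg[where g = m])
    fix y assume y: "y \<in> carrier G"
    show "((\<lambda>x. case (y, x) of (y, x) \<Rightarrow> u n (x \<otimes> y) * m y) has_sum m y) (carrier G)"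
      using has_sum_cmult_left[OF has_sum_u, of "m y"]
        has_sum_right_translate[OF y, of "\<lambda>x. u n x * m y"] by simp
  qed (auto intro!: mult_nonneg_nonneg nonneg nonneg_u has_sum_one)
  then have J: "((\<lambda>(x, y). u n (x \<otimes> y) * m y) has_sum 1) (carrier G \<times> carrier G)"
    by (subst has_sum_swap) simp
  have "(u (Suc n) has_sum 1) (carrier G)"
  proof (rule has_sum_SigmaD[OF J])
    fix x assume x: "x \<in> carrier G"
    have "(\<lambda>y. u n (x \<otimes> y) * m y) summable_on carrier G"
      using summable_on_SigmaD1[where f = "\<lambda>x y. u n (x \<otimes> y) * m y", OF _ x] J
      by (auto simp: has_sum_iff)
    then show "((\<lambda>y. case (x, y) of (x, y) \<Rightarrow> u n (x \<otimes> y) * m y) has_sum u (Suc n) x) (carrier G)"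
      using conv_pow_Suc_eq[OF x, of n] by (simp add: has_sum_iff)
  qed
  moreover have "\<forall>x\<in>carrier G. 0 \<le> u (Suc n) x"
    using conv_pow_Suc_eq by (auto intro!: infsum_nonneg mult_nonneg_nonneg nonneg nonneg_u)
  ultimately show ?case
    by blast
qed

lemma conv_pow_nonneg: "x \<in> carrier G \<Longrightarrow> 0 \<le> u n x"
  using conv_pow_nonneg_has_sum by blast

lemma has_sum_conv_pow: "(u n has_sum 1) (carrier G)"
  using conv_pow_nonneg_has_sum by blast

lemma conv_pow_le_one:
  assumes "x \<in> carrier G"
  shows "u n x \<le> 1"
  using finite_sum_le_has_sum[OF has_sum_conv_pow, of "{x}"] assms conv_pow_nonneg by simp

lemma conv_pow_L2: "u n \<in> L2 G"
  unfolding L2_def mem_Collect_eq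
proof (rule summable_on_comparison_test[OF has_sum_imp_summable[OF has_sum_conv_pow]])
  fix x assume x: "x \<in> carrier G"
  show "(u n x)\<^sup>2 \<le> u n x"
    using mult_left_le[OF conv_pow_le_one[OF x] conv_pow_nonneg[OF x]] by (simp add: power2_eq_square)
qed simp

lemma l2_inner_conv_pow_Suc:
  assumes "g \<in> L2 G"
  shows "l2_inner G (u (Suc i)) g = markov_form (u i) g"
proof -
  have "l2_inner G (u (Suc i)) g
      = (\<Sum>\<^sub>\<infinity>x\<in>carrier G. \<Sum>\<^sub>\<infinity>y\<in>carrier G. u i (x \<otimes> y) * g x * m y)"
    unfolding l2_inner_def
  proof (rule infsum_cong)
    fix x assume "x \<in> carrier G"
    then have "u (Suc i) x * g x = (\<Sum>\<^sub>\<infinity>y\<in>carrier G. u i (x \<otimes> y) * m y) * g x"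
      by (simp only: conv_pow_Suc_eq)
    also have "\<dots> = (\<Sum>\<^sub>\<infinity>y\<in>carrier G. u i (x \<otimes> y) * m y * g x)"
      by (rule infsum_cmult_left'[symmetric])
    finally show "u (Suc i) x * g x = (\<Sum>\<^sub>\<infinity>y\<in>carrier G. u i (x \<otimes> y) * g x * m y)"
      by (simp only: mult.assoc mult.commute[of "m _"])
  qed
  also have "\<dots> = markov_form (u i) g"
    unfolding markov_form_def
    using infsum_Sigma_banach[OF has_sum_imp_summable[OF has_sum_markov_form[OF conv_pow_L2 assms]]]
    by simp
  finally show ?thesis .
qed

text \<open>Symmetry of \<open>m\<close> makes the Markov operator self-adjoint, which lets steps move from one
  factor of the inner product to the other.\<close>

lemma l2_inner_conv_pow: "l2_inner G (u i) (u j) = u (i + j) \<one>"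
proof -
  have "l2_inner G (u i) (u j) = l2_inner G (u 0) (u (i + j))"
  proof (induction i arbitrary: j)
    case (Suc i)
    have "l2_inner G (u (Suc i)) (u j) = l2_inner G (u i) (u (Suc j))"
      using l2_inner_conv_pow_Suc[OF conv_pow_L2, of i j] l2_inner_conv_pow_Suc[OF conv_pow_L2, of j i]
        markov_form_commute[OF conv_pow_L2 conv_pow_L2, of i j]
      by (simp add: l2_inner_commute)
    then show ?case
      using Suc[of "Suc j"] by simp
  qed simp
  also have "\<dots> = (\<Sum>\<^sub>\<infinity>x\<in>{\<one>}. u (i + j) x)"
    unfolding l2_inner_def by (rule infsum_cong_neutral) auto
  finally show ?thesis
    by simp
qed

lemma markov_form_conv_pow: "markov_form (u i) (u j) = u (Suc (i + j)) \<one>"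
  using l2_inner_conv_pow_Suc[OF conv_pow_L2, of i j] l2_inner_conv_pow[of "Suc i" j] by simp

lemma dirichlet_conv_pow_pair_le:
  "dirichlet G m (\<lambda>x. u n x + u (Suc n) x) \<le> 2 * (u (2 * n) \<one> - u (2 * n + 2) \<one>)"
    and norm2sq_conv_pow_pair_ge: "u (2 * n) \<one> \<le> norm2sq G (\<lambda>x. u n x + u (Suc n) x)"
proof -
  define r where "r j = u (2 * n + j) \<one>" for j
  define v where "v c = (\<lambda>x. u n x + c * u (Suc n) x)" for c :: real
  have ip: "l2_inner G (u n) (u n) = r 0" "l2_inner G (u n) (u (Suc n)) = r 1"
    "l2_inner G (u (Suc n)) (u (Suc n)) = r 2"
    by (simp_all add: l2_inner_conv_pow r_def mult_2[symmetric] del: conv_pow.simps)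
  have mf: "markov_form (u n) (u n) = r 1" "markov_form (u n) (u (Suc n)) = r 2"
    "markov_form (u (Suc n)) (u (Suc n)) = r 3"
    by (simp_all add: markov_form_conv_pow r_def mult_2[symmetric] numeral_3_eq_3 del: conv_pow.simps)
  have norm_v: "norm2sq G (v c) = r 0 + 2 * c * r 1 + c\<^sup>2 * r 2" for c
    unfolding v_def norm2sq_add_cmult[OF conv_pow_L2 conv_pow_L2] ip ..
  have mf_v: "markov_form (v c) (v c) = r 1 + 2 * c * r 2 + c\<^sup>2 * r 3" for c
    unfolding v_def markov_form_add_cmult[OF conv_pow_L2 conv_pow_L2] mf ..
  have v_L2: "v c \<in> L2 G" for c
    unfolding v_def by (intro L2_add L2_cmult conv_pow_L2)
  \<comment> \<open>Positivity of \<open>I + P\<close> on \<open>u\<^sub>n - u\<^sub>n\<^sub>+\<^sub>1\<close> gives \<open>r\<^sub>1 + r\<^sub>2 \<le> r\<^sub>0 + r\<^sub>3\<close>.\<close>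
  have "- markov_form (v (-1)) (v (-1)) \<le> norm2sq G (v (-1))"
    using abs_markov_form_le[OF v_L2 v_L2, of "-1" "-1"] by simp
  moreover have "dirichlet G m (v 1) = norm2sq G (v 1) - markov_form (v 1) (v 1)"
    by (rule has_sum_dirichlet(2)[OF v_L2])
  ultimately have "dirichlet G m (v 1) \<le> 2 * (r 0 - r 2)"
    by (simp add: norm_v mf_v)
  then show "dirichlet G m (\<lambda>x. u n x + u (Suc n) x) \<le> 2 * (u (2 * n) \<one> - u (2 * n + 2) \<one>)"
    by (simp add: v_def r_def del: conv_pow.simps)
  have "0 \<le> r 1" "0 \<le> r 2"
    by (simp_all add: r_def conv_pow_nonneg del: conv_pow.simps)
  then show "u (2 * n) \<one> \<le> norm2sq G (\<lambda>x. u n x + u (Suc n) x)"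
    using norm_v[of 1] by (simp add: v_def r_def del: conv_pow.simps)
qed

end

section \<open>A discrete differential inequality\<close>

locale decay_recursion =
  fixes w :: "nat \<Rightarrow> real" and \<Phi> :: "real \<Rightarrow> real"
  assumes w_pos: "\<And>n. 0 < w n" and w_le_one: "\<And>n. w n \<le> 1"
    and w_decrement: "\<And>n. w (Suc n) \<le> w n - w n / \<Phi> (1 / w n)"
    and \<Phi>_ge_one: "\<And>y. 1 \<le> y \<Longrightarrow> 1 \<le> \<Phi> y"
    and \<Phi>_mono: "\<And>x y. 1 \<le> x \<Longrightarrow> x \<le> y \<Longrightarrow> \<Phi> x \<le> \<Phi> y"
begin

lemma inverse_w_ge_one: "1 \<le> 1 / w n"
  using w_pos[of n] w_le_one[of n] by simp

lemma w_decreasing: "m \<le> n \<Longrightarrow> w n \<le> w m"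
proof (induction n rule: dec_induct)
  case (step n)
  have "0 \<le> w n / \<Phi> (1 / w n)"
    using w_pos[of n] \<Phi>_ge_one[OF inverse_w_ge_one[of n]] by (simp add: less_imp_le)
  then show ?case
    using step w_decrement[of n] by linarith
qed simp

lemma w_le_linear_decrease:
  assumes b: "0 < b"
  shows "w (n + l) \<le> max b (w n - real l * (b / \<Phi> (1 / b)))"
proof (induction l)
  case (Suc l)
  define c where "c = b / \<Phi> (1 / b)"
  show ?case
  proof (cases "b < w (n + l)")
    case True
    have "c \<le> w (n + l) / \<Phi> (1 / b)"
      using True \<Phi>_ge_one[of "1 / b"] inverse_w_ge_one[of "n + l"] b
      by (auto simp: c_def frac_le intro!: divide_right_mono)
    also have "\<dots> \<le> w (n + l) / \<Phi> (1 / w (n + l))"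
      using True b w_pos[of "n + l"] \<Phi>_ge_one[OF inverse_w_ge_one[of "n + l"]]
        \<Phi>_mono[OF inverse_w_ge_one[of "n + l"], of "1 / b"]
      by (intro divide_left_mono) (auto simp: frac_le)
    finally have "w (n + Suc l) \<le> w (n + l) - c"
      using w_decrement[of "n + l"] by simp
    moreover have "w (n + l) \<le> w n - real l * c"
      using Suc.IH True by (simp add: c_def max_def split: if_splits)
    ultimately have "w (n + Suc l) \<le> w n - real (Suc l) * c"
      by (simp add: algebra_simps)
    then show ?thesis
      unfolding c_def by (rule order_trans) (rule max.cobounded2)
  next
    case False
    then show ?thesis
      using w_decreasing[of "n + l" "n + Suc l"] by simp
  qed
qed simp

definition halving_time :: "nat \<Rightarrow> nat" where
  "halving_time J = (\<Sum>j<J. nat \<lceil>\<Phi> (2 ^ Suc j)\<rceil>)"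

lemma w_le_after_halving_time:
  assumes "halving_time J \<le> n"
  shows "w n \<le> 1 / 2 ^ J"
  using assms
proof (induction J arbitrary: n)
  case 0
  then show ?case
    using w_le_one by simp
next
  case (Suc J)
  define b :: real where "b = 1 / 2 ^ Suc J"
  define L where "L = nat \<lceil>\<Phi> (2 ^ Suc J)\<rceil>"
  have b: "0 < b" "1 / b = 2 ^ Suc J"
    by (simp_all add: b_def)
  have \<Phi>: "1 \<le> \<Phi> (1 / b)"
    unfolding b(2) by (intro \<Phi>_ge_one one_le_power) simp
  have "b \<le> real L * (b / \<Phi> (1 / b))"
    using mult_right_mono[of "\<Phi> (1 / b)" "real L" "b / \<Phi> (1 / b)"] b \<Phi>
    by (simp add: L_def b(2) real_nat_ceiling_ge)
  moreover have "w (halving_time J) \<le> 2 * b"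
    using Suc.IH[of "halving_time J"] by (simp add: b_def)
  ultimately have "w (halving_time J + L) \<le> b"
    using w_le_linear_decrease[OF b(1), of "halving_time J" L] by linarith
  moreover have "halving_time (Suc J) = halving_time J + L"
    by (simp add: halving_time_def L_def)
  ultimately show ?case
    using w_decreasing[of "halving_time J + L" n] Suc.prems by (simp add: b_def)
qed

end

section \<open>Regularly varying scale functions\<close>

lemma sum_atMost_le_of_eventually_geometric:
  fixes c :: "nat \<Rightarrow> real"
  assumes c: "\<And>j. 1 \<le> c j" and lam: "1 < lam"
    and grow: "\<And>j. j0 \<le> j \<Longrightarrow> lam * c j \<le> c (Suc j)"
  shows "\<exists>B>0. \<forall>J. (\<Sum>j\<le>J. c j) \<le> B * c J"
proof -
  define B where "B = (\<Sum>j\<le>j0. c j) + lam / (lam - 1)"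
  have nonneg: "0 \<le> c j" for j
    using c[of j] by linarith
  have B_ge: "(\<Sum>j\<le>j0. c j) \<le> B" "lam / (lam - 1) \<le> B"
    using lam sum_nonneg[of "{..j0}" c] nonneg by (auto simp: B_def)
  have B_pos: "0 < B"
    using B_ge(2) lam by (smt (verit) divide_pos_pos)
  have small: "(\<Sum>j\<le>J. c j) \<le> B * c J" if "J \<le> j0" for J
  proof -
    have "(\<Sum>j\<le>J. c j) \<le> (\<Sum>j\<le>j0. c j)"
      by (rule sum_mono2) (use that nonneg in auto)
    also have "\<dots> \<le> B"
      by (rule B_ge(1))
    also have "\<dots> \<le> B * c J"
      using mult_left_mono[OF c[of J]] B_pos by simp
    finally show ?thesis .
  qed
  have "(\<Sum>j\<le>J. c j) \<le> B * c J" for J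
  proof (induction J)
    case 0
    then show ?case
      by (rule small) simp
  next
    case (Suc J)
    show ?case
    proof (cases "Suc J \<le> j0")
      case True
      then show ?thesis
        by (rule small)
    next
      case False
      then have "c J \<le> c (Suc J) / lam"
        using grow[of J] lam by (simp add: field_simps)
      then have "(\<Sum>j\<le>Suc J. c j) \<le> B * (c (Suc J) / lam) + c (Suc J)"
        using Suc.IH mult_left_mono[of "c J" "c (Suc J) / lam" B] B_pos by simp
      also have "\<dots> \<le> B * c (Suc J)"
      proof -
        have "B / lam + 1 \<le> B"
          using B_ge(2) lam by (simp add: field_simps)
        from mult_right_mono[OF this nonneg[of "Suc J"]] show ?thesis
          by (simp add: algebra_simps)
      qed
      finally show ?thesis .
    qed
  qed
  with B_pos show ?thesis
    by blast
qed

locale regular_scale =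
  fixes F Finv :: "real \<Rightarrow> real" and \<gamma> :: real
  assumes F_pos: "\<And>t. 0 < t \<Longrightarrow> 0 < F t"
    and F_strict_mono: "strict_mono_on {0<..} F"
    and F_bij: "bij_betw F {0<..} {0<..}"
    and Finv_eq: "\<And>s. 0 < s \<Longrightarrow> Finv s = inv_into {0<..} F s"
    and \<gamma>_pos: "0 < \<gamma>"
    and F_regularly_varying: "regularly_varying F \<gamma>"
begin

lemma F_less: "0 < s \<Longrightarrow> s < t \<Longrightarrow> F s < F t"
  using strict_mono_onD[OF F_strict_mono, of s t] by auto

lemma F_mono: "0 < s \<Longrightarrow> s \<le> t \<Longrightarrow> F s \<le> F t"
  using F_less[of s t] by (cases "s = t") auto

lemma Finv_pos: "0 < s \<Longrightarrow> 0 < Finv s"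
  using Finv_eq bij_betw_inv_into[OF F_bij] by (auto simp: bij_betw_def)

lemma F_Finv: "0 < s \<Longrightarrow> F (Finv s) = s"
  using Finv_eq bij_betw_inv_into_right[OF F_bij] by auto

lemma Finv_F: "0 < t \<Longrightarrow> Finv (F t) = t"
  using Finv_eq[of "F t"] F_pos[of t] bij_betw_inv_into_left[OF F_bij] by auto

lemma Finv_mono: "0 < s \<Longrightarrow> s \<le> t \<Longrightarrow> Finv s \<le> Finv t"
  using F_less[of "Finv t" "Finv s"] Finv_pos[of t] F_Finv[of s] F_Finv[of t] by force

lemma F_max_one_Finv_ge:
  assumes "0 < s"
  shows "s \<le> F (max 1 (Finv s))"
  using F_mono[OF Finv_pos[OF assms], of "max 1 (Finv s)"] F_Finv[OF assms] by simp

lemma max_one_Finv_le: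
  assumes "1 \<le> t"
  shows "max 1 (Finv (max t 2)) \<le> (1 + max 1 (Finv 2) / Finv 1) * Finv t"
proof -
  have Finv1: "0 < Finv 1" "Finv 1 \<le> Finv t"
    using Finv_pos Finv_mono assms by auto
  have "max 1 (Finv (max t 2)) \<le> Finv t + max 1 (Finv 2)"
  proof (cases "t \<le> 2")
    case True
    then show ?thesis
      using Finv_pos[of t] assms by (simp add: max.absorb2)
  next
    case False
    then have "max t 2 = t"
      by simp
    with Finv_pos[of t] assms show ?thesis
      by (simp add: max_def)
  qed
  also have "max 1 (Finv 2) \<le> max 1 (Finv 2) / Finv 1 * Finv t"
    using Finv1 mult_left_mono[OF Finv1(2), of "max 1 (Finv 2) / Finv 1"] by simp
  finally show ?thesis
    by (simp add: algebra_simps)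
qed

lemma F_max_one_nat_ceiling_le:
  assumes B: "0 < B" and x: "2 * B < x"
  shows "F (real (max 1 (nat \<lceil>x / (2 * B)\<rceil>))) \<le> F (x / B)"
proof (rule F_mono)
  have y: "1 < x / (2 * B)"
    using B x by (simp add: field_simps)
  then have "max 1 (nat \<lceil>x / (2 * B)\<rceil>) = nat \<lceil>x / (2 * B)\<rceil>"
    by (intro max_absorb2) linarith
  then have "real (max 1 (nat \<lceil>x / (2 * B)\<rceil>)) = real_of_int \<lceil>x / (2 * B)\<rceil>"
    using y by simp
  also have "\<dots> < x / (2 * B) + 1"
    by linarith
  also have "\<dots> < x / B"
    using y B by (simp add: field_simps)
  finally show "real (max 1 (nat \<lceil>x / (2 * B)\<rceil>)) \<le> x / B"
    by simp
qed simp

text \<open>Regular variation of positive index makes \<open>F\<^sup>-\<^sup>1\<close> grow by a fixed factor \<open>\<lambda> > 1\<close> on every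
  dyadic scale: with \<open>\<lambda>\<^sup>\<gamma> < 2\<close>, eventually \<open>F (\<lambda> t) < 2 F t\<close>.\<close>

lemma Finv_doubling: "\<exists>lam>1. \<exists>r0>0. \<forall>r\<ge>r0. lam * Finv r \<le> Finv (2 * r)"
proof -
  define lam :: real where "lam = 2 powr (1 / (2 * \<gamma>))"
  have lam: "1 < lam"
    unfolding lam_def using \<gamma>_pos by (intro gr_one_powr) auto
  have "lam powr \<gamma> = 2 powr (1 / 2)"
    unfolding lam_def using \<gamma>_pos by (simp add: powr_powr)
  also have "\<dots> < 2 powr 1"
    by (rule powr_less_mono) auto
  finally have "lam powr \<gamma> < 2"
    by simp
  moreover have "((\<lambda>t. F (lam * t) / F t) \<longlongrightarrow> lam powr \<gamma>) at_top"
    using F_regularly_varying lam by (auto simp: regularly_varying_def)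
  ultimately obtain N where N: "\<And>t. N \<le> t \<Longrightarrow> F (lam * t) / F t < 2"
    using order_tendstoD(2) by (fastforce simp: eventually_at_top_linorder)
  define t0 where "t0 = max N 1"
  have "0 < F t0"
    by (simp add: F_pos t0_def)
  have "lam * Finv r \<le> Finv (2 * r)" if r: "F t0 \<le> r" for r
  proof -
    have "0 < r"
      using \<open>0 < F t0\<close> r by linarith
    have "t0 \<le> Finv r"
      using Finv_mono[OF F_pos r] Finv_F[of t0] by (simp add: t0_def)
    then have "F (lam * Finv r) < 2 * r"
      using N[of "Finv r"] F_Finv[OF \<open>0 < r\<close>] \<open>0 < r\<close> by (simp add: t0_def field_simps)
    then show ?thesis
      using F_mono[of "Finv (2 * r)" "lam * Finv r"] Finv_pos F_Finv \<open>0 < r\<close> by force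
  qed
  then show ?thesis
    using lam \<open>0 < F t0\<close> by blast
qed

lemma sum_dyadic_Finv_le:
  assumes "0 < a"
  shows "\<exists>B>0. \<forall>J. (\<Sum>j\<le>J. max 1 (Finv (a * 2 ^ j))) \<le> B * max 1 (Finv (a * 2 ^ J))"
proof -
  obtain lam r0 where lam: "1 < lam" and r0: "0 < r0"
    and doubling: "\<And>r. r0 \<le> r \<Longrightarrow> lam * Finv r \<le> Finv (2 * r)"
    using Finv_doubling by blast
  obtain j0 where j0: "max r0 (F 1) < a * 2 ^ j0"
    using real_arch_pow[of 2 "max r0 (F 1) / a"] assms by (auto simp: field_simps)
  have "lam * max 1 (Finv (a * 2 ^ j)) \<le> max 1 (Finv (a * 2 ^ Suc j))" if "j0 \<le> j" for j
  proof -
    have "a * 2 ^ j0 \<le> a * 2 ^ j"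
      using that assms by (intro mult_left_mono power_increasing) auto
    with j0 have r: "r0 \<le> a * 2 ^ j" "F 1 \<le> a * 2 ^ j"
      by auto
    have "1 \<le> Finv (a * 2 ^ j)"
      using Finv_mono[OF F_pos r(2)] Finv_F[of 1] by simp
    then show ?thesis
      using doubling[OF r(1)] by (simp add: mult.left_commute)
  qed
  then show ?thesis
    by (intro sum_atMost_le_of_eventually_geometric[OF _ lam]) auto
qed

end

section \<open>Faber--Krahn inequality and the two estimates\<close>

locale pseudo_poincare_setting = group G + regular_scale F Finv \<gamma>
  for G :: "('a, 'b) monoid_scheme" (structure) and F Finv :: "real \<Rightarrow> real" and \<gamma> :: real +
  fixes k :: nat
    and mus :: "nat \<Rightarrow> 'a \<Rightarrow> real"
    and C :: real
    and K :: "nat \<Rightarrow> real \<Rightarrow> 'a set"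
    and Q :: nat
  assumes prob: "\<And>i. i \<le> k \<Longrightarrow> prob_meas G (mus i)"
    and symm: "\<And>i. i \<le> k \<Longrightarrow> sym_meas G (mus i)"
    and C_pos: "0 < C"
    and K_subset: "\<And>i R. i \<le> k \<Longrightarrow> 0 < R \<Longrightarrow> K i R \<subseteq> carrier G"
    and pseudo_poincare: "\<And>i R f h. i \<le> k \<Longrightarrow> 0 < R \<Longrightarrow> f \<in> L2 G \<Longrightarrow> h \<in> K i R \<Longrightarrow>
         (\<Sum>\<^sub>\<infinity>x\<in>carrier G. (f (x \<otimes> h) - f x)\<^sup>2) \<le> C * R * dirichlet G (mus i) f"
    and Q_pos: "1 \<le> Q"
    and growth: "\<And>R. 1 \<le> R \<Longrightarrow>
         infinite (set_power G (\<Union>i\<le>k. K i R) Q) \<or>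
         F R \<le> real (card (set_power G (\<Union>i\<le>k. K i R) Q))"
begin

definition mu :: "'a \<Rightarrow> real" where
  "mu = (\<lambda>x. (\<Sum>i\<le>k. mus i x) / real (k + 1))"

lemma group_prob_mus: "i \<le> k \<Longrightarrow> group_prob G (mus i)"
  using prob[of i] group_axioms by (simp add: prob_meas_def group_prob_def group_prob_axioms_def)

sublocale walk: group_sym_prob G mu
proof
  show "x \<in> carrier G \<Longrightarrow> 0 \<le> mu x" for x
    using prob by (auto simp: mu_def prob_meas_def intro!: sum_nonneg divide_nonneg_nonneg)
  have "((\<lambda>x. \<Sum>i\<le>k. mus i x) has_sum (\<Sum>i\<le>k. 1)) (carrier G)"
    by (rule has_sum_sum) (use prob in \<open>auto simp: prob_meas_def\<close>)
  from has_sum_cmult_left[OF this, of "1 / real (k + 1)"]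
  show "(mu has_sum 1) (carrier G)"
    by (simp add: mu_def)
  show "x \<in> carrier G \<Longrightarrow> mu (inv x) = mu x" for x
    using symm by (simp add: mu_def sym_meas_def)
qed

lemma mus_le_mu:
  assumes "i \<le> k" "y \<in> carrier G"
  shows "mus i y \<le> real (k + 1) * mu y"
  using member_le_sum[of i "{..k}" "\<lambda>i. mus i y"] prob assms
  by (simp add: mu_def prob_meas_def)

definition fk_const :: real where
  "fk_const = (real Q)\<^sup>2 * C * real (k + 1)"

lemma fk_const_pos: "0 < fk_const"
  using Q_pos C_pos by (simp add: fk_const_def)

lemma shift_energy_set_power_le:
  assumes g: "g \<in> L2 G" and R: "1 \<le> R" and t: "t \<in> set_power G (\<Union>i\<le>k. K i R) Q"
  shows "t \<in> carrier G \<and> shift_energy G g t \<le> fk_const * R * dirichlet G mu g"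
proof -
  define D where "D = C * R * (real (k + 1) * dirichlet G mu g)"
  have gen: "h \<in> carrier G \<and> shift_energy G g h \<le> D" if h: "h \<in> (\<Union>i\<le>k. K i R)" for h
  proof -
    obtain i where i: "i \<le> k" "h \<in> K i R"
      using h by auto
    have "shift_energy G g h \<le> C * R * dirichlet G (mus i) g"
      using pseudo_poincare[OF i(1) _ g i(2)] R by (simp add: shift_energy_def)
    also have "\<dots> \<le> D"
      unfolding D_def using C_pos R
      by (intro mult_left_mono dirichlet_le_of_measure_le[OF group_prob_mus walk.group_prob_axioms]
          mus_le_mu i g) auto
    finally show ?thesis
      using K_subset[OF i(1), of R] i(2) R by auto
  qed
  obtain gs where gs: "t = foldr (\<otimes>) gs \<one>" "length gs = Q" "set gs \<subseteq> (\<Union>i\<le>k. K i R)"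
    using t by (auto simp: set_power_def)
  show ?thesis
    using shift_energy_prod_le[OF g gen gs(3)] gs(1,2) by (simp add: D_def fk_const_def ac_simps)
qed

theorem faber_krahn:
  assumes fin: "finite (supp_G G g)" and V: "1 \<le> V" "real (card (supp_G G g)) \<le> V"
  shows "norm2sq G g \<le> fk_const * max 1 (Finv (2 * V)) * dirichlet G mu g"
proof -
  define R where "R = max 1 (Finv (2 * V))"
  define T where "T = set_power G (\<Union>i\<le>k. K i R) Q"
  have R: "1 \<le> R" "2 * V \<le> F R"
    using F_max_one_Finv_ge[of "2 * V"] V by (auto simp: R_def)
  obtain S where S: "finite S" "S \<subseteq> T" "2 * V \<le> real (card S)"
  proof (cases "finite T")
    case True
    then show ?thesis
      using that[of T] growth[OF R(1)] R(2) by (auto simp: T_def)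
  next
    case False
    then obtain S where "finite S" "card S = nat \<lceil>2 * V\<rceil>" "S \<subseteq> T"
      using infinite_arbitrarily_large by blast
    then show ?thesis
      using that[of S] by linarith
  qed
  show ?thesis
    using norm2sq_le_of_shift_energy_le[OF fin _ V(2) S(1) _ S(3)] V(1) S(2)
      shift_energy_set_power_le[OF L2_finite_support[OF fin] R(1)]
    by (auto simp: T_def R_def ac_simps)
qed

lemma spectral_profile_ge:
  assumes V: "1 \<le> V"
  shows "1 / (fk_const * max 1 (Finv (2 * V))) \<le> spectral_profile G mu V"
  unfolding spectral_profile_def
proof (rule cInf_greatest)
  define \<delta> where "\<delta> = (\<lambda>x. if x = \<one> then 1 else 0 :: real)"
  have "supp_G G \<delta> = {\<one>}"
    by (auto simp: supp_G_def \<delta>_def)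
  then have "dirichlet G mu \<delta> / norm2sq G \<delta> \<in> {dirichlet G mu f / norm2sq G f |f. finite (supp_G G f)
      \<and> 1 \<le> card (supp_G G f) \<and> real (card (supp_G G f)) \<le> V}"
    using V by (intro CollectI exI[of _ \<delta>]) simp
  then show "{dirichlet G mu f / norm2sq G f |f. finite (supp_G G f) \<and> 1 \<le> card (supp_G G f)
      \<and> real (card (supp_G G f)) \<le> V} \<noteq> {}"
    by blast
next
  fix r assume "r \<in> {dirichlet G mu f / norm2sq G f |f. finite (supp_G G f) \<and> 1 \<le> card (supp_G G f)
      \<and> real (card (supp_G G f)) \<le> V}"
  then obtain f where r: "r = dirichlet G mu f / norm2sq G f"
    and f: "finite (supp_G G f)" "1 \<le> card (supp_G G f)" "real (card (supp_G G f)) \<le> V"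
    by blast
  obtain x where "x \<in> supp_G G f"
    using f(2) by fastforce
  then have "0 < norm2sq G f"
    by (intro norm2sq_pos L2_finite_support f(1)) (auto simp: supp_G_def)
  moreover have "0 < fk_const * max 1 (Finv (2 * V))"
    using fk_const_pos by simp
  ultimately show "1 / (fk_const * max 1 (Finv (2 * V))) \<le> r"
    using faber_krahn[OF f(1) V f(3)] by (simp add: r pos_le_divide_eq pos_divide_le_eq mult.commute)
qed

theorem spectral_profile_dominates: "dom_real (\<lambda>t. 1 / Finv t) (spectral_profile G mu)"
  unfolding dom_real_def
proof (intro exI conjI allI impI)
  define c where "c = fk_const * (1 + max 1 (Finv 2) / Finv 1)"
  show "0 < c"
    using fk_const_pos Finv_pos[of 1] by (simp add: c_def add_pos_nonneg)
  show "(0::real) < 1 / 2"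
    by simp
  fix t :: real assume t: "1 \<le> t"
  define V where "V = max (1 / 2 * t) 1"
  define M where "M = max 1 (Finv (2 * V))"
  have "2 * V = max t 2"
    by (auto simp: V_def max_def)
  then have M: "fk_const * M \<le> c * Finv t"
    using mult_left_mono[OF max_one_Finv_le[OF t] less_imp_le[OF fk_const_pos]]
    by (simp only: M_def c_def mult.assoc)
  have "0 < fk_const * M"
    using fk_const_pos by (simp add: M_def)
  have "1 / Finv t = c / (c * Finv t)"
    using \<open>0 < c\<close> by simp
  also have "\<dots> \<le> c / (fk_const * M)"
    by (rule divide_left_mono[OF M]) (use \<open>0 < c\<close> \<open>0 < fk_const * M\<close> Finv_pos[of t] t in auto)
  also have "\<dots> = c * (1 / (fk_const * max 1 (Finv (2 * V))))"
    by (simp add: M_def)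
  also have "\<dots> \<le> c * spectral_profile G mu V"
    using spectral_profile_ge[of V] \<open>0 < c\<close> by (intro mult_left_mono) (auto simp: V_def)
  finally show "1 / Finv t \<le> c * spectral_profile G mu (max (1 / 2 * t) 1)"
    by (simp add: V_def)
qed

abbreviation return_prob :: "nat \<Rightarrow> real" where
  "return_prob n \<equiv> conv_pow G mu (2 * n) \<one>"

lemma return_prob_eq_norm2sq: "return_prob n = norm2sq G (walk.u n)"
  by (simp add: norm2sq_eq_l2_inner walk.l2_inner_conv_pow mult_2 del: conv_pow.simps)

lemma return_prob_pos: "0 < return_prob n"
proof -
  obtain x where "x \<in> carrier G" "walk.u n x \<noteq> 0"
    using walk.has_sum_conv_pow[of n] infsum_0[of "carrier G" "walk.u n"] by (auto simp: has_sum_iff)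
  then show ?thesis
    unfolding return_prob_eq_norm2sq by (rule norm2sq_pos[OF walk.conv_pow_L2])
qed

lemma return_prob_le_one: "return_prob n \<le> 1"
  by (rule walk.conv_pow_le_one) simp

text \<open>Faber--Krahn is applied to the part of \<open>u\<^sub>n + u\<^sub>n\<^sub>+\<^sub>1\<close> above height \<open>w\<^sub>n/8\<close>: truncation
  keeps half of its norm while its support has at most \<open>16/w\<^sub>n\<close> points.\<close>

lemma return_prob_decrement:
  fixes n :: nat
  defines "w \<equiv> return_prob n"
  shows "return_prob (Suc n) \<le> w - w / (4 * fk_const * max 1 (Finv (32 / w)))"
proof -
  define s where "s = (\<lambda>x. walk.u n x + walk.u (Suc n) x)"
  define t where "t = w / 8"
  define g where "g = (\<lambda>x. max (s x - t) 0)"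
  define M where "M = max 1 (Finv (32 / w))"
  have w: "0 < w" "w \<le> 1"
    using return_prob_pos return_prob_le_one by (simp_all add: w_def)
  have s: "s \<in> L2 G" "\<And>x. x \<in> carrier G \<Longrightarrow> 0 \<le> s x" "(s has_sum 2) (carrier G)"
    using has_sum_add[OF walk.has_sum_conv_pow[of n] walk.has_sum_conv_pow[of "Suc n"]]
    by (auto simp: s_def intro: L2_add walk.conv_pow_L2 add_nonneg_nonneg walk.conv_pow_nonneg
        simp del: conv_pow.simps)
  have t: "0 < t"
    using w by (simp add: t_def)
  note trunc = walk.truncation[OF s(2,1,3) t, folded g_def]
  have "w / 2 \<le> norm2sq G g"
    using trunc(3) walk.norm2sq_conv_pow_pair_ge[of n] by (simp add: s_def t_def w_def)
  also have "\<dots> \<le> fk_const * M * dirichlet G mu g"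
    using faber_krahn[OF trunc(4), of "16 / w"] trunc(5) w by (simp add: M_def t_def field_simps)
  also have "\<dots> \<le> fk_const * M * dirichlet G mu s"
    using trunc(2) fk_const_pos by (intro mult_left_mono) (auto simp: M_def)
  also have "\<dots> \<le> fk_const * M * (2 * (w - return_prob (Suc n)))"
    using walk.dirichlet_conv_pow_pair_le[of n] fk_const_pos
    by (intro mult_left_mono) (auto simp: s_def w_def M_def)
  finally have "w / 2 \<le> fk_const * M * (2 * (w - return_prob (Suc n)))" .
  then show ?thesis
    using fk_const_pos by (simp add: M_def field_simps)
qed

definition decay_profile :: "real \<Rightarrow> real" where
  "decay_profile y = max 1 (4 * fk_const) * max 1 (Finv (32 * y))"

lemma decay_profile_ge_one: "1 \<le> decay_profile y"
  unfolding decay_profile_def by (rule order_trans[OF _ mult_mono[of 1 _ 1]]) auto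

lemma decay_recursion_return_prob: "decay_recursion return_prob decay_profile"
proof
  fix n
  show "0 < return_prob n" "return_prob n \<le> 1"
    by (rule return_prob_pos return_prob_le_one)+
  define w where "w = return_prob n"
  have "4 * fk_const * max 1 (Finv (32 / w)) \<le> decay_profile (1 / w)"
    by (simp add: decay_profile_def mult_right_mono)
  then have "w / decay_profile (1 / w) \<le> w / (4 * fk_const * max 1 (Finv (32 / w)))"
    using return_prob_pos[of n] fk_const_pos decay_profile_ge_one[of "1 / w"]
    by (intro divide_left_mono) (auto simp: w_def)
  then show "return_prob (Suc n) \<le> return_prob n - return_prob n / decay_profile (1 / return_prob n)"
    using return_prob_decrement[of n] by (simp add: w_def)
next
  show "1 \<le> decay_profile y" for y
    by (rule decay_profile_ge_one)
  show "decay_profile x \<le> decay_profile y" if "1 \<le> x" "x \<le> y" for x y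
    using Finv_mono[of "32 * x" "32 * y"] that
    by (auto simp: decay_profile_def intro!: mult_left_mono)
qed

interpretation decay: decay_recursion return_prob decay_profile
  by (rule decay_recursion_return_prob)

lemma halving_time_le: "\<exists>B>0. \<forall>J. real (decay.halving_time J) \<le> B * max 1 (Finv (32 * 2 ^ J))"
proof -
  define c where "c j = max 1 (Finv (32 * 2 ^ j))" for j :: nat
  define a where "a = max 1 (4 * fk_const)"
  obtain B where B: "0 < B" "\<And>J. (\<Sum>j\<le>J. c j) \<le> B * c J"
    using sum_dyadic_Finv_le[of 32] by (auto simp: c_def)
  have "real (decay.halving_time J) \<le> 2 * a * B * c J" for J
  proof -
    have "real (decay.halving_time J) = (\<Sum>j<J. real (nat \<lceil>a * c (Suc j)\<rceil>))"
      by (simp add: decay.halving_time_def decay_profile_def a_def c_def mult.left_commute)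
    also have "\<dots> \<le> (\<Sum>j<J. 2 * a * c (Suc j))"
    proof (intro sum_mono)
      fix j
      have "1 \<le> a * c (Suc j)"
        by (rule order_trans[OF _ mult_mono[of 1 _ 1]]) (auto simp: a_def c_def)
      then show "real (nat \<lceil>a * c (Suc j)\<rceil>) \<le> 2 * a * c (Suc j)"
        by linarith
    qed
    also have "\<dots> \<le> 2 * a * (\<Sum>j\<le>J. c j)"
    proof -
      have "(\<Sum>j\<le>J. c j) = c 0 + (\<Sum>j<J. c (Suc j))"
        by (induction J) auto
      moreover have "0 \<le> c 0"
        by (simp add: c_def)
      ultimately show ?thesis
        by (simp add: sum_distrib_left[symmetric] a_def mult_left_mono)
    qed
    also have "\<dots> \<le> 2 * a * B * c J"
      using B(2)[of J] by (simp add: a_def mult_left_mono)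
    finally show ?thesis .
  qed
  moreover have "0 < 2 * a * B"
    using B(1) by (simp add: a_def)
  ultimately show ?thesis
    unfolding c_def by blast
qed

lemma return_prob_le_at_dyadic_scale:
  "\<exists>B\<ge>1. \<forall>n J. B * max 1 (Finv (32 * 2 ^ J)) \<le> real n \<longrightarrow> return_prob n \<le> 1 / 2 ^ J"
proof -
  obtain B' where B': "\<And>J. real (decay.halving_time J) \<le> B' * max 1 (Finv (32 * 2 ^ J))"
    using halving_time_le by blast
  have "return_prob n \<le> 1 / 2 ^ J" if "max 1 B' * max 1 (Finv (32 * 2 ^ J)) \<le> real n" for n J
  proof (rule decay.w_le_after_halving_time)
    have "B' * max 1 (Finv (32 * 2 ^ J)) \<le> max 1 B' * max 1 (Finv (32 * 2 ^ J))"
      by (rule mult_right_mono) auto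
    then show "decay.halving_time J \<le> n"
      using B'[of J] that by linarith
  qed
  then show ?thesis
    by (intro exI[of _ "max 1 B'"]) auto
qed

lemma return_prob_le_inverse_F: "\<exists>B\<ge>1. \<forall>n. 2 * B < real n \<longrightarrow> return_prob n \<le> 64 / F (real n / B)"
proof -
  define c where "c J = max 1 (Finv (32 * 2 ^ J))" for J :: nat
  obtain B where B: "1 \<le> B" and halved: "\<And>n J. B * c J \<le> real n \<Longrightarrow> return_prob n \<le> 1 / 2 ^ J"
    using return_prob_le_at_dyadic_scale unfolding c_def by blast
  have "return_prob n \<le> 64 / F (real n / B)" if n: "2 * B < real n" for n
  proof -
    let ?P = "\<lambda>J. 1 / 2 ^ J < return_prob n"
    have "\<not> ?P 0"
      using return_prob_le_one[of n] by simp
    moreover have "\<exists>J. (1 / 2 :: real) ^ J < return_prob n"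
      by (rule real_arch_pow_inv[OF return_prob_pos]) simp
    then have "\<exists>J. ?P J"
      by (simp add: power_one_over)
    ultimately obtain J where J: "\<not> ?P J" "?P (Suc J)"
      using exists_least_lemma[of ?P] by blast
    have "real n < B * c (Suc J)"
      using halved[of "Suc J" n] J(2) by linarith
    then have "B * 2 < B * c (Suc J)" "real n / B < c (Suc J)"
      using n B by (linarith, simp add: pos_divide_less_eq mult.commute)
    then have c: "2 < c (Suc J)" "real n / B < c (Suc J)"
      using B by simp_all
    then have "c (Suc J) = Finv (64 * 2 ^ J)"
      by (simp add: c_def max_def split: if_splits)
    then have "F (real n / B) < 64 * 2 ^ J"
      using F_less[of "real n / B" "Finv (64 * 2 ^ J)"] F_Finv[of "64 * 2 ^ J"] c(2) n B by simp
    moreover have "0 < F (real n / B)"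
      using F_pos n B by simp
    ultimately have "64 / (64 * 2 ^ J) \<le> 64 / F (real n / B)"
      by (intro divide_left_mono) auto
    then show ?thesis
      using J(1) by simp
  qed
  with B show ?thesis
    by blast
qed

theorem return_prob_dominated:
  "dom_nat (\<lambda>n. conv_pow G mu (2 * n) \<one>) (\<lambda>n. 1 / F (real n))"
proof -
  obtain B where B: "1 \<le> B" and decay: "\<And>n. 2 * B < real n \<Longrightarrow> return_prob n \<le> 64 / F (real n / B)"
    using return_prob_le_inverse_F by blast
  define c where "c = max 64 (F 1)"
  have c: "0 < c" "1 \<le> c / F 1"
    using F_pos[of 1] by (auto simp: c_def)
  have "return_prob n \<le> c * (1 / F (real (max 1 (nat \<lceil>1 / (2 * B) * real n\<rceil>))))" for n
  proof (cases "real n \<le> 2 * B")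
    case True
    then have "max 1 (nat \<lceil>1 / (2 * B) * real n\<rceil>) = 1"
      using B by simp
    then show ?thesis
      using return_prob_le_one[of n] c(2) by simp
  next
    case False
    have "64 / F (real n / B) \<le> c / F (real (max 1 (nat \<lceil>real n / (2 * B)\<rceil>)))"
      using F_max_one_nat_ceiling_le[of B "real n"] F_pos B False
      by (intro frac_le) (auto simp: c_def)
    then show ?thesis
      using decay[of n] False by simp
  qed
  with c(1) B show ?thesis
    unfolding dom_nat_def by (intro exI[of _ c] conjI exI[of _ "1 / (2 * B)"]) auto
qed

end

theorem mainTheorem9:
  fixes G :: "('a, 'b) monoid_scheme"
    and k :: nat
    and mus :: "nat \<Rightarrow> 'a \<Rightarrow> real"
    and C :: real
    and K :: "nat \<Rightarrow> real \<Rightarrow> 'a set"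
    and Q :: nat
    and F Finv :: "real \<Rightarrow> real"
    and \<gamma> :: real
  assumes grp: "group G"
    and "countable (carrier G)"
    and prob: "\<And>i. i \<le> k \<Longrightarrow> prob_meas G (mus i)"
    and symm: "\<And>i. i \<le> k \<Longrightarrow> sym_meas G (mus i)"
    and Cpos: "C > 0"
    and Ksub: "\<And>i R. i \<le> k \<Longrightarrow> R > 0 \<Longrightarrow> K i R \<subseteq> carrier G"
    and Kineq: "\<And>i R f h. i \<le> k \<Longrightarrow> R > 0 \<Longrightarrow> f \<in> L2 G \<Longrightarrow> h \<in> K i R \<Longrightarrow>
         (\<Sum>\<^sub>\<infinity>x\<in>carrier G. (f (x \<otimes>\<^bsub>G\<^esub> h) - f x)\<^sup>2) \<le> C * R * dirichlet G (mus i) f"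
    and Qpos: "Q \<ge> 1"
    and Fpos: "\<And>t. t > 0 \<Longrightarrow> F t > 0"
    and Fmono: "strict_mono_on {0<..} F"
    and Fbij: "bij_betw F {0<..} {0<..}"
    and Finv: "\<And>s. s > 0 \<Longrightarrow> Finv s = inv_into {0<..} F s"
    and gpos: "\<gamma> > 0"
    and Freg: "regularly_varying F \<gamma>"
    and growth: "\<And>R. R \<ge> 1 \<Longrightarrow>
         infinite (set_power G (\<Union>i\<le>k. K i R) Q) \<or>
         real (card (set_power G (\<Union>i\<le>k. K i R) Q)) \<ge> F R"
  defines "mu \<equiv> (\<lambda>x. (\<Sum>i\<le>k. mus i x) / real (k + 1))"
  shows "dom_real (\<lambda>t. 1 / Finv t) (spectral_profile G mu)
       \<and> dom_nat (\<lambda>n. conv_pow G mu (2 * n) \<one>\<^bsub>G\<^esub>) (\<lambda>n. 1 / F (real n))"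
proof -
  have setting: "pseudo_poincare_setting G F Finv \<gamma> k mus C K Q"
    by (rule pseudo_poincare_setting.intro[OF grp regular_scale.intro
          pseudo_poincare_setting_axioms.intro])
       (fact Fpos Fmono Fbij Finv gpos Freg prob symm Cpos Ksub Kineq Qpos growth)+
  have "pseudo_poincare_setting.mu k mus = mu"
    unfolding mu_def by (rule pseudo_poincare_setting.mu_def[OF setting])
  then show ?thesis
    using pseudo_poincare_setting.spectral_profile_dominates[OF setting]
      pseudo_poincare_setting.return_prob_dominated[OF setting]
    by simp
qed

end
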